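(* Let $M$ be a complex manifold, $m\ge 1$, and let $\varphi_0,\dots,\varphi_m$ be smooth homogeneous complex-valued differential forms on $M$ of degrees $|\varphi_0|,\dots,|\varphi_m|$. Then $$ d\,\omega_m(\varphi_0,\dots,\varphi_m)=(-1)^m\,\partial\varphi_0\wedge\dots\wedge\partial\varphi_m+\overline\partial\varphi_0\wedge\dots\wedge\overline\partial\varphi_m+\frac{1}{m!}\,\mathrm{Alt}_{m+1}\Big((-1)^{|\varphi_0|}\,\overline\partial\partial\varphi_0\wedge\omega_{m-1}(\varphi_1,\dots,\varphi_m)\Big). $$
   Context: Here $d=\partial+\overline\partial$. For homogeneous forms $f_1,\dots,f_n$ and an expression $F(f_1,\dots,f_n)$ set $\mathrm{Alt}_nF(f_1,\dots,f_n):=\sum_{\sigma\in\Sigma_n}\mathrm{sgn}_{\sigma;f_1,\dots,f_n}F(f_{\sigma(1)},\dots,f_{\sigma(n)})$, where the sign of interchanging two of the forms $f_i,f_j$ is $(-1)^{(|f_i|+1)(|f_j|+1)}$ and the sign of a general permutation is the product of the signs of the transpositions composing it (i.e. the Koszul sign with respect to the shifted degrees $|f_i|+1$). Define $$ \omega_m(\varphi_0,\dots,\varphi_m):=\frac{1}{(m+1)!}\mathrm{Alt}_{m+1}\Big(\sum_{k=0}^m(-1)^k\varphi_0\wedge\partial\varphi_1\wedge\dots\wedge\partial\varphi_k\wedge\overline\partial\varphi_{k+1}\wedge\dots\wedge\overline\partial\varphi_m\Big), $$ with the alternation applied to the forms $\varphi_0,\dots,\varphi_m$ (not moving the differential operators);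 in particular $\omega_0(\varphi_0)=\varphi_0$. *)

theory Defs
  imports "HOL-Combinatorics.Permutations" Complex_Main
begin

text \<open>Abstract model of the algebra of smooth complex-valued forms on a complex
manifold: a real algebra 'a (multiplication = wedge product) with a grading
gr k (homogeneous forms of total degree k) and two operators D (=\<partial>) and
Db (=\<partial>-bar) satisfying the standard identities.\<close>

definition dolbeault_alg :: "(nat \<Rightarrow> 'a::real_algebra_1 set) \<Rightarrow> ('a \<Rightarrow> 'a) \<Rightarrow> ('a \<Rightarrow> 'a) \<Rightarrow> bool" where
  "dolbeault_alg gr D Db \<longleftrightarrow>
     (\<forall>k. 0 \<in> gr k \<and> (\<forall>x\<in>gr k. \<forall>y\<in>gr k. x + y \<in> gr k) \<and> (\<forall>c. \<forall>x\<in>gr k. c *\<^sub>R x \<in> gr k)) \<and>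
     1 \<in> gr 0 \<and>
     (\<forall>k l. \<forall>x\<in>gr k. \<forall>y\<in>gr l. x * y \<in> gr (k + l)) \<and>
     (\<forall>k l. \<forall>x\<in>gr k. \<forall>y\<in>gr l. x * y = ((-1::real) ^ (k * l)) *\<^sub>R (y * x)) \<and>
     (\<forall>x y. D (x + y) = D x + D y \<and> Db (x + y) = Db x + Db y) \<and>
     (\<forall>c x. D (c *\<^sub>R x) = c *\<^sub>R D x \<and> Db (c *\<^sub>R x) = c *\<^sub>R Db x) \<and>
     (\<forall>k. \<forall>x\<in>gr k. D x \<in> gr (k + 1) \<and> Db x \<in> gr (k + 1)) \<and>
     (\<forall>x. D (D x) = 0 \<and> Db (Db x) = 0 \<and> D (Db x) = - Db (D x)) \<and>
     (\<forall>k. \<forall>x\<in>gr k. \<forall>y.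
        D (x * y) = D x * y + ((-1::real) ^ k) *\<^sub>R (x * D y) \<and>
        Db (x * y) = Db x * y + ((-1::real) ^ k) *\<^sub>R (x * Db y))"

text \<open>Koszul sign of a permutation sigma of {..<n}, w.r.t. shifted degrees k i + 1:
the list f_0..f_{n-1} is rearranged to f_{sigma 0}..f_{sigma (n-1)}.\<close>
definition koszul_sign :: "nat \<Rightarrow> (nat \<Rightarrow> nat) \<Rightarrow> (nat \<Rightarrow> nat) \<Rightarrow> real" where
  "koszul_sign n k \<sigma> = (-1) ^ card {(a, b). a < b \<and> b < n \<and> \<sigma> b < \<sigma> a \<and>
                                     odd ((k (\<sigma> a) + 1) * (k (\<sigma> b) + 1))}"

definition Alt :: "nat \<Rightarrow> (nat \<Rightarrow> nat) \<Rightarrow> ((nat \<Rightarrow> 'a::real_vector) \<Rightarrow> (nat \<Rightarrow> nat) \<Rightarrow> 'a)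
                   \<Rightarrow> (nat \<Rightarrow> 'a) \<Rightarrow> 'a" where
  "Alt n k F \<phi> = (\<Sum>\<sigma> | \<sigma> permutes {..<n}. koszul_sign n k \<sigma> *\<^sub>R F (\<phi> \<circ> \<sigma>) (k \<circ> \<sigma>))"

definition omega :: "('a::real_algebra_1 \<Rightarrow> 'a) \<Rightarrow> ('a \<Rightarrow> 'a) \<Rightarrow> nat \<Rightarrow> (nat \<Rightarrow> nat) \<Rightarrow> (nat \<Rightarrow> 'a) \<Rightarrow> 'a" where
  "omega D Db m k \<phi> = (1 / fact (m + 1)) *\<^sub>R Alt (m + 1) k
     (\<lambda>f g. \<Sum>j\<le>m. ((-1::real) ^ j) *\<^sub>R
        (f 0 * prod_list (map (\<lambda>i. D (f i)) [1..<j + 1]) * prod_list (map (\<lambda>i. Db (f i)) [j + 1..<m + 1]))) \<phi>"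

end

theory Submission
  imports Defs
begin

(* omega_m is 1/(m+1)! times the alternation of the sum over j of (-1)^j W_j, where the operator
   word W_j is phi_0 * D phi_1 ... D phi_j * Db phi_(j+1) ... Db phi_m.  The graded Leibniz rule
   splits d W_j into two groups of terms:
   (a) d on phi_0 gives D phi_0 D..D Db..Db and Db phi_0 D..D Db..Db.  The latter is the word with
       j leading D's after a cyclic rotation, which the alternation does not see; hence the
       alternated terms telescope in j to (m+1)! ((-1)^m D..D + Db..Db).
   (b) d on D phi_i or Db phi_i (i >= 1) gives +-Db D phi_i, since D^2 = Db^2 = 0 and
       D Db = - Db D.  Rotating this factor to the front leaves Db D phi_i times a word of
       omega_(m-1); each such term arises m + 1 times, and the nested alternation
       Alt_(m+1)(.. Alt_m ..) = m! Alt_(m+1)(..) produces the last summand. *)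

definition index_pairs :: "nat \<Rightarrow> (nat \<times> nat) set" where
  "index_pairs n = {(a, b). a < b \<and> b < n}"

definition graded_sign :: "nat \<Rightarrow> (nat \<Rightarrow> nat) \<Rightarrow> (nat \<Rightarrow> nat) \<Rightarrow> real" where
  "graded_sign n e \<sigma> =
     (\<Prod>(a, b)\<in>index_pairs n. if \<sigma> b < \<sigma> a \<and> odd (e (\<sigma> a) * e (\<sigma> b)) then -1 else 1)"

lemma finite_index_pairs [simp]: "finite (index_pairs n)"
  by (rule finite_subset[of _ "{..<n} \<times> {..<n}"]) (auto simp: index_pairs_def)

lemma koszul_sign_eq_graded_sign: "koszul_sign n k \<sigma> = graded_sign n (\<lambda>i. k i + 1) \<sigma>"
proof -
  let ?Q = "\<lambda>p. \<sigma> (snd p) < \<sigma> (fst p) \<and> odd ((k (\<sigma> (fst p)) + 1) * (k (\<sigma> (snd p)) + 1))"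
  have "graded_sign n (\<lambda>i. k i + 1) \<sigma> = (\<Prod>p\<in>index_pairs n. if ?Q p then -1 else 1)"
    unfolding graded_sign_def by (rule prod.cong) auto
  also have "\<dots> = (\<Prod>p\<in>index_pairs n \<inter> {p. ?Q p}. -1) * (\<Prod>p\<in>index_pairs n \<inter> - {p. ?Q p}. 1)"
    by (rule prod.If_cases) simp
  also have "\<dots> = (-1) ^ card (index_pairs n \<inter> {p. ?Q p})" by simp
  also have "index_pairs n \<inter> {p. ?Q p} = {(a, b). a < b \<and> b < n \<and> \<sigma> b < \<sigma> a \<and>
                                     odd ((k (\<sigma> a) + 1) * (k (\<sigma> b) + 1))}"
    by (auto simp: index_pairs_def)
  finally show ?thesis unfolding koszul_sign_def by simp
qed

lemma prod_index_pairs_Suc: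
  "(\<Prod>p\<in>index_pairs (Suc n). h p) = (\<Prod>b<n. h (0, Suc b)) * (\<Prod>(a, b)\<in>index_pairs n. h (Suc a, Suc b))"
proof -
  let ?first = "(\<lambda>b. (0, Suc b)) ` {..<n}" and ?rest = "(\<lambda>(a, b). (Suc a, Suc b)) ` index_pairs n"
  have split: "index_pairs (Suc n) = ?first \<union> ?rest"
  proof (rule set_eqI)
    fix p :: "nat \<times> nat"
    obtain a b where p: "p = (a, b)" by (cases p)
    show "p \<in> index_pairs (Suc n) \<longleftrightarrow> p \<in> ?first \<union> ?rest"
    proof
      assume "p \<in> index_pairs (Suc n)"
      then obtain b' where ab: "a < Suc b'" "b' < n" "b = Suc b'"
        using p by (cases b) (auto simp: index_pairs_def)
      show "p \<in> ?first \<union> ?rest"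
      proof (cases a)
        case 0 then show ?thesis using p ab by auto
      next
        case (Suc a')
        then have "(a', b') \<in> index_pairs n" using ab by (auto simp: index_pairs_def)
        then show ?thesis using p Suc ab by force
      qed
    qed (auto simp: index_pairs_def p)
  qed
  have inj_first: "inj_on (\<lambda>b. (0::nat, Suc b)) {..<n}" by (auto simp: inj_on_def)
  have inj_rest: "inj_on (\<lambda>(a, b). (Suc a, Suc b)) (index_pairs n)" by (auto simp: inj_on_def)
  have "(\<Prod>p\<in>index_pairs (Suc n). h p) = (\<Prod>p\<in>?first. h p) * (\<Prod>p\<in>?rest. h p)"
    unfolding split by (rule prod.union_disjoint) auto
  then show ?thesis
    unfolding prod.reindex[OF inj_first] prod.reindex[OF inj_rest] by (simp add: o_def case_prod_beta)
qed

lemma prod_index_pairs_permute: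
  assumes \<tau>: "\<tau> permutes {..<n}" and S_sym: "\<And>u v. u \<noteq> v \<Longrightarrow> S u v = S v u"
  shows "(\<Prod>(a, b)\<in>index_pairs n. S (\<tau> a) (\<tau> b)) = (\<Prod>(a, b)\<in>index_pairs n. S a b)"
proof -
  have inj_\<tau>: "\<tau> u = \<tau> v \<longleftrightarrow> u = v" for u v using permutes_inj[OF \<tau>] by (auto simp: inj_def)
  have \<tau>_in: "u < n \<Longrightarrow> \<tau> u < n" for u using permutes_in_image[OF \<tau>] by auto
  define h where "h p = (min (\<tau> (fst p)) (\<tau> (snd p)), max (\<tau> (fst p)) (\<tau> (snd p)))" for p
  have h_into: "h ` index_pairs n \<subseteq> index_pairs n"
  proof
    fix x assume "x \<in> h ` index_pairs n"
    then obtain a b where ab: "a < b" "b < n" "x = h (a, b)" by (auto simp: index_pairs_def)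
    moreover have "\<tau> a \<noteq> \<tau> b" using inj_\<tau>[of a b] ab by auto
    ultimately show "x \<in> index_pairs n" using \<tau>_in[of a] \<tau>_in[of b]
      by (auto simp: h_def index_pairs_def min_def max_def)
  qed
  have h_inj: "inj_on h (index_pairs n)"
  proof (rule inj_onI)
    fix p q assume p: "p \<in> index_pairs n" and q: "q \<in> index_pairs n" and hpq: "h p = h q"
    obtain a b where pab: "p = (a, b)" "a < b" using p by (cases p) (auto simp: index_pairs_def)
    obtain c d where qcd: "q = (c, d)" "c < d" using q by (cases q) (auto simp: index_pairs_def)
    from hpq have "{\<tau> a, \<tau> b} = {\<tau> c, \<tau> d}"
      unfolding h_def pab qcd by (auto simp: min_def max_def split: if_splits)
    then have "{a, b} = {c, d}" using inj_\<tau> by (auto simp: doubleton_eq_iff)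
    then show "p = q" using pab qcd by (auto simp: doubleton_eq_iff)
  qed
  have h_onto: "h ` index_pairs n = index_pairs n" by (rule endo_inj_surj[OF finite_index_pairs h_into h_inj])
  have "(\<Prod>(a, b)\<in>index_pairs n. S (\<tau> a) (\<tau> b)) = (\<Prod>p\<in>index_pairs n. case_prod S (h p))"
  proof (rule prod.cong[OF refl])
    fix p assume "p \<in> index_pairs n"
    then obtain a b where "p = (a, b)" "a \<noteq> b" by (cases p) (auto simp: index_pairs_def)
    then show "(case p of (a, b) \<Rightarrow> S (\<tau> a) (\<tau> b)) = case_prod S (h p)"
      using inj_\<tau>[of a b] S_sym[of "\<tau> a" "\<tau> b"] by (auto simp: h_def min_def max_def)
  qed
  also have "\<dots> = (\<Prod>p\<in>h ` index_pairs n. case_prod S p)" by (simp add: prod.reindex[OF h_inj])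
  finally show ?thesis unfolding h_onto by simp
qed

lemma graded_sign_comp:
  assumes \<sigma>: "\<sigma> permutes {..<n}" and \<tau>: "\<tau> permutes {..<n}"
  shows "graded_sign n e (\<sigma> \<circ> \<tau>) = graded_sign n e \<sigma> * graded_sign n (e \<circ> \<sigma>) \<tau>"
proof -
  define S where "S u v = (if (u < v) \<noteq> (\<sigma> u < \<sigma> v) \<and> odd (e (\<sigma> u) * e (\<sigma> v)) then -1 else (1::real))"
    for u v
  have inj_\<sigma>: "\<sigma> u = \<sigma> v \<longleftrightarrow> u = v" for u v using permutes_inj[OF \<sigma>] by (auto simp: inj_def)
  have inj_\<tau>: "\<tau> u = \<tau> v \<longleftrightarrow> u = v" for u v using permutes_inj[OF \<tau>] by (auto simp: inj_def)
  have S_sym: "S u v = S v u" if "u \<noteq> v" for u v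
    using that inj_\<sigma>[of u v] unfolding S_def by (auto simp: mult.commute)
  have sign_\<sigma>: "graded_sign n e \<sigma> = (\<Prod>(a, b)\<in>index_pairs n. S a b)"
    unfolding graded_sign_def S_def
    by (rule prod.cong) (auto simp: index_pairs_def inj_\<sigma> dest: order.strict_implies_not_eq)
  have factor: "(if (\<sigma> \<circ> \<tau>) b < (\<sigma> \<circ> \<tau>) a \<and> odd (e ((\<sigma> \<circ> \<tau>) a) * e ((\<sigma> \<circ> \<tau>) b)) then -1 else 1)
      = (if \<tau> b < \<tau> a \<and> odd ((e \<circ> \<sigma>) (\<tau> a) * (e \<circ> \<sigma>) (\<tau> b)) then -1 else 1) * S (\<tau> a) (\<tau> b)"
    if "(a, b) \<in> index_pairs n" for a b
  proof -
    have "a \<noteq> b" using that by (auto simp: index_pairs_def)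
    then have "\<tau> a \<noteq> \<tau> b" "\<sigma> (\<tau> a) \<noteq> \<sigma> (\<tau> b)" using inj_\<sigma> inj_\<tau> by auto
    then show ?thesis unfolding S_def by (auto simp: linorder_neq_iff)
  qed
  have "graded_sign n e (\<sigma> \<circ> \<tau>) = (\<Prod>(a, b)\<in>index_pairs n.
      (if \<tau> b < \<tau> a \<and> odd ((e \<circ> \<sigma>) (\<tau> a) * (e \<circ> \<sigma>) (\<tau> b)) then -1 else 1) * S (\<tau> a) (\<tau> b))"
    unfolding graded_sign_def by (rule prod.cong[OF refl]) (use factor in auto)
  also have "\<dots> = graded_sign n (e \<circ> \<sigma>) \<tau> * (\<Prod>(a, b)\<in>index_pairs n. S (\<tau> a) (\<tau> b))"
    unfolding graded_sign_def prod.distrib[symmetric] by (rule prod.cong) auto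
  finally show ?thesis
    using prod_index_pairs_permute[of \<tau> n S, OF \<tau> S_sym] sign_\<sigma> by simp
qed

(* Composing a sequence with front_cycle i moves its i-th entry to the front:
   (f 0, f 1, ...) becomes (f i, f 0, ..., f (i - 1), f (i + 1), ...). *)
definition front_cycle :: "nat \<Rightarrow> nat \<Rightarrow> nat" where
  "front_cycle i l = (if l = 0 then i else if l \<le> i then l - 1 else l)"

definition lift_perm :: "(nat \<Rightarrow> nat) \<Rightarrow> nat \<Rightarrow> nat" where
  "lift_perm \<tau> l = (if l = 0 then 0 else Suc (\<tau> (l - 1)))"

lemma lift_perm_0 [simp]: "lift_perm \<tau> 0 = 0"
  and lift_perm_Suc [simp]: "lift_perm \<tau> (Suc b) = Suc (\<tau> b)"
  by (auto simp: lift_perm_def)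

lemma front_cycle_permutes:
  assumes "i < n" shows "front_cycle i permutes {..<n}"
proof (rule bij_imp_permutes)
  have inj: "inj_on (front_cycle i) {..<n}" by (auto simp: inj_on_def front_cycle_def split: if_splits)
  have into: "front_cycle i ` {..<n} \<subseteq> {..<n}" using assms by (auto simp: front_cycle_def)
  show "bij_betw (front_cycle i) {..<n} {..<n}"
    unfolding bij_betw_def using inj endo_inj_surj[OF _ into inj] by auto
  show "x \<notin> {..<n} \<Longrightarrow> front_cycle i x = x" for x using assms by (auto simp: front_cycle_def)
qed

lemma lift_perm_permutes:
  assumes \<tau>: "\<tau> permutes {..<n}" shows "lift_perm \<tau> permutes {..<Suc n}"
proof (rule bij_imp_permutes)
  have inj_\<tau>: "\<tau> u = \<tau> v \<longleftrightarrow> u = v" for u v using permutes_inj[OF \<tau>] by (auto simp: inj_def)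
  have \<tau>_in: "u < n \<Longrightarrow> \<tau> u < n" for u using permutes_in_image[OF \<tau>] by auto
  have \<tau>_out: "u \<ge> n \<Longrightarrow> \<tau> u = u" for u using permutes_not_in[OF \<tau>] by auto
  have inj: "inj_on (lift_perm \<tau>) {..<Suc n}"
    by (auto simp: inj_on_def lift_perm_def inj_\<tau> split: if_splits)
  have into: "lift_perm \<tau> ` {..<Suc n} \<subseteq> {..<Suc n}" using \<tau>_in by (auto simp: lift_perm_def)
  show "bij_betw (lift_perm \<tau>) {..<Suc n} {..<Suc n}"
    unfolding bij_betw_def using inj endo_inj_surj[OF _ into inj] by auto
  show "x \<notin> {..<Suc n} \<Longrightarrow> lift_perm \<tau> x = x" for x using \<tau>_out[of "x - 1"] by (auto simp: lift_perm_def)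
qed

lemma graded_sign_lift_perm: "graded_sign (Suc n) e (lift_perm \<tau>) = graded_sign n (e \<circ> Suc) \<tau>"
  unfolding graded_sign_def prod_index_pairs_Suc by (simp add: case_prod_beta)

(* Moving the i-th entry across the i entries in front of it. *)
lemma graded_sign_front_cycle:
  assumes "i \<le> n"
  shows "graded_sign (Suc n) e (front_cycle i) = (-1) ^ (e i * (\<Sum>l<i. e l))"
proof -
  have front_pairs: "(\<Prod>b<n. if front_cycle i (Suc b) < front_cycle i 0
        \<and> odd (e (front_cycle i 0) * e (front_cycle i (Suc b))) then -1 else 1)
     = (\<Prod>b<n. if b < i \<and> odd (e i * e b) then -1 else (1::real))"
    by (rule prod.cong) (auto simp: front_cycle_def)
  have tail_pairs: "(\<Prod>(a, b)\<in>index_pairs n. if front_cycle i (Suc b) < front_cycle i (Suc a)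
        \<and> odd (e (front_cycle i (Suc a)) * e (front_cycle i (Suc b))) then -1 else 1) = (1::real)"
    by (rule prod.neutral) (auto simp: index_pairs_def front_cycle_def)
  have "graded_sign (Suc n) e (front_cycle i) = (\<Prod>b<n. if b < i \<and> odd (e i * e b) then -1 else 1)"
    unfolding graded_sign_def prod_index_pairs_Suc using front_pairs tail_pairs by simp
  also have "\<dots> = (\<Prod>b<i. (-1::real) ^ (e i * e b))"
    using assms by (intro prod.mono_neutral_cong_right) auto
  also have "\<dots> = (-1) ^ (\<Sum>b<i. e i * e b)" by (simp add: power_sum)
  finally show ?thesis by (simp add: sum_distrib_left)
qed

lemma permutes_front_cycle_decompose:
  assumes \<sigma>: "\<sigma> permutes {..<Suc n}"
  obtains \<tau> where "\<tau> permutes {..<n}" "\<sigma> = front_cycle (\<sigma> 0) \<circ> lift_perm \<tau>"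
proof -
  let ?q = "\<sigma> 0"
  have q: "?q < Suc n" using permutes_in_image[OF \<sigma>] by auto
  have c: "front_cycle ?q permutes {..<Suc n}" by (rule front_cycle_permutes[OF q])
  define \<pi> where "\<pi> = inv (front_cycle ?q) \<circ> \<sigma>"
  have \<pi>: "\<pi> permutes {..<Suc n}"
    unfolding \<pi>_def by (rule permutes_compose[OF \<sigma> permutes_inv[OF c]])
  have \<pi>_0: "\<pi> 0 = 0"
    unfolding \<pi>_def using permutes_inv_eq[OF c] by (simp add: front_cycle_def)
  have inj_\<pi>: "\<pi> u = \<pi> v \<longleftrightarrow> u = v" for u v using permutes_inj[OF \<pi>] by (auto simp: inj_def)
  have \<pi>_in: "u < Suc n \<Longrightarrow> \<pi> u < Suc n" for u using permutes_in_image[OF \<pi>] by auto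
  have \<pi>_out: "u \<ge> Suc n \<Longrightarrow> \<pi> u = u" for u using permutes_not_in[OF \<pi>] by auto
  have \<pi>_Suc: "\<pi> (Suc b) \<noteq> 0" for b using inj_\<pi>[of "Suc b" 0] \<pi>_0 by auto
  define \<tau> where "\<tau> b = \<pi> (Suc b) - 1" for b
  have lift: "lift_perm \<tau> = \<pi>"
  proof
    fix l show "lift_perm \<tau> l = \<pi> l"
      using \<pi>_Suc[of "l - 1"] \<pi>_0 by (cases l) (auto simp: lift_perm_def \<tau>_def)
  qed
  have "\<tau> permutes {..<n}"
  proof (rule bij_imp_permutes)
    have inj: "inj_on \<tau> {..<n}"
    proof (rule inj_onI)
      fix a b assume "\<tau> a = \<tau> b"
      then have "\<pi> (Suc a) = \<pi> (Suc b)" using \<pi>_Suc[of a] \<pi>_Suc[of b] unfolding \<tau>_def by arith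
      then show "a = b" using inj_\<pi> by simp
    qed
    have into: "\<tau> ` {..<n} \<subseteq> {..<n}" using \<pi>_in \<pi>_Suc by (fastforce simp: \<tau>_def)
    show "bij_betw \<tau> {..<n} {..<n}"
      unfolding bij_betw_def using inj endo_inj_surj[OF _ into inj] by auto
    show "x \<notin> {..<n} \<Longrightarrow> \<tau> x = x" for x using \<pi>_out[of "Suc x"] by (auto simp: \<tau>_def)
  qed
  moreover have "\<sigma> = front_cycle ?q \<circ> lift_perm \<tau>"
    unfolding lift \<pi>_def by (auto simp: fun_eq_iff permutes_inverses[OF c])
  ultimately show ?thesis using that by blast
qed

(* Products over index lists are rearranged explicitly below, so upt_Suc must not fire eagerly. *)
declare upt_Suc [simp del]

lemma upt_append: "a \<le> b \<Longrightarrow> b \<le> c \<Longrightarrow> [a..<c] = [a..<b] @ [b..<c]"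
  using upt_add_eq_append[of a b "c - b"] by simp

lemma upt_Suc_shift: "[0..<Suc n] = 0 # map Suc [0..<n]"
  by (simp add: upt_conv_Cons map_Suc_upt)

locale graded_comm_algebra =
  fixes gr :: "nat \<Rightarrow> 'a::real_algebra_1 set"
  assumes gr_one: "1 \<in> gr 0"
    and gr_mult: "x \<in> gr k \<Longrightarrow> y \<in> gr l \<Longrightarrow> x * y \<in> gr (k + l)"
    and gr_comm: "x \<in> gr k \<Longrightarrow> y \<in> gr l \<Longrightarrow> x * y = ((-1::real) ^ (k * l)) *\<^sub>R (y * x)"
begin

lemma prod_list_gr:
  "(\<And>l. l < n \<Longrightarrow> x l \<in> gr (e l)) \<Longrightarrow> prod_list (map x [0..<n]) \<in> gr (\<Sum>l<n. e l)"
proof (induction n)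
  case 0 then show ?case using gr_one by simp
next
  case (Suc n)
  have "prod_list (map x [0..<n]) * x n \<in> gr ((\<Sum>l<n. e l) + e n)"
    using Suc by (intro gr_mult) auto
  then show ?case by (simp add: upt_Suc)
qed

(* Moving the factor x q to the front passes it across x 0, ..., x (q - 1). *)
lemma prod_list_front_cycle:
  assumes q: "q < Suc n" and x: "\<And>l. l < Suc n \<Longrightarrow> x l \<in> gr (e l)"
  shows "prod_list (map (x \<circ> front_cycle q) [0..<Suc n])
    = graded_sign (Suc n) e (front_cycle q) *\<^sub>R prod_list (map x [0..<Suc n])"
proof -
  let ?P = "prod_list (map x [0..<q])" and ?R = "prod_list (map x [Suc q..<Suc n])"
  have P_gr: "?P \<in> gr (\<Sum>l<q. e l)" using x q by (intro prod_list_gr) auto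
  have rotated: "map (x \<circ> front_cycle q) [0..<Suc n] = x q # map x [0..<q] @ map x [Suc q..<Suc n]"
  proof -
    have "[0..<Suc n] = 0 # map Suc [0..<q] @ [Suc q..<Suc n]"
      using q upt_append[of 1 "Suc q" "Suc n"] by (simp add: upt_conv_Cons map_Suc_upt)
    then show ?thesis by (auto simp: front_cycle_def)
  qed
  have sorted: "[0..<Suc n] = [0..<q] @ q # [Suc q..<Suc n]"
    using q upt_append[of 0 q "Suc n"] upt_conv_Cons[of q "Suc n"] by simp
  have "prod_list (map (x \<circ> front_cycle q) [0..<Suc n]) = x q * ?P * ?R"
    unfolding rotated by (simp add: mult.assoc)
  also have "\<dots> = ((-1::real) ^ (e q * (\<Sum>l<q. e l))) *\<^sub>R (?P * x q * ?R)"
    by (simp add: gr_comm[OF x[OF q] P_gr])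
  also have "?P * x q * ?R = prod_list (map x [0..<Suc n])"
    unfolding sorted by (simp add: mult.assoc)
  finally show ?thesis using q by (simp add: graded_sign_front_cycle o_def)
qed

lemma prod_list_permute:
  assumes "\<sigma> permutes {..<n}" and "\<And>l. l < n \<Longrightarrow> x l \<in> gr (e l)"
  shows "prod_list (map (x \<circ> \<sigma>) [0..<n]) = graded_sign n e \<sigma> *\<^sub>R prod_list (map x [0..<n])"
  using assms
proof (induction n arbitrary: x e \<sigma>)
  case 0 then show ?case by (simp add: graded_sign_def index_pairs_def)
next
  case (Suc n)
  define q where "q = \<sigma> 0"
  obtain \<tau> where \<tau>: "\<tau> permutes {..<n}" and \<sigma>: "\<sigma> = front_cycle q \<circ> lift_perm \<tau>"
    using permutes_front_cycle_decompose[OF Suc.prems(1)] unfolding q_def by blast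
  have q: "q < Suc n" unfolding q_def using permutes_in_image[OF Suc.prems(1)] by auto
  have c: "front_cycle q permutes {..<Suc n}" by (rule front_cycle_permutes[OF q])
  let ?y = "x \<circ> front_cycle q \<circ> Suc" and ?e = "e \<circ> front_cycle q \<circ> Suc"
  have y_gr: "l < n \<Longrightarrow> ?y l \<in> gr (?e l)" for l
    using Suc.prems(2) permutes_in_image[OF c, of "Suc l"] by auto
  have sign_\<sigma>: "graded_sign (Suc n) e \<sigma> = graded_sign (Suc n) e (front_cycle q) * graded_sign n ?e \<tau>"
    unfolding \<sigma> graded_sign_comp[OF c lift_perm_permutes[OF \<tau>]] graded_sign_lift_perm
    by (simp add: o_assoc)
  have tail: "x \<circ> \<sigma> \<circ> Suc = ?y \<circ> \<tau>" unfolding \<sigma> by (simp add: fun_eq_iff)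
  have "prod_list (map (x \<circ> \<sigma>) [0..<Suc n]) = x q * prod_list (map (?y \<circ> \<tau>) [0..<n])"
    unfolding upt_Suc_shift list.map map_map prod_list.Cons tail by (simp add: q_def)
  also have "\<dots> = graded_sign n ?e \<tau> *\<^sub>R (x q * prod_list (map ?y [0..<n]))"
    by (simp add: Suc.IH[OF \<tau>, of ?y ?e] y_gr del: comp_apply)
  also have "x q * prod_list (map ?y [0..<n]) = prod_list (map (x \<circ> front_cycle q) [0..<Suc n])"
    unfolding upt_Suc_shift by (simp add: front_cycle_def o_def)
  also have "\<dots> = graded_sign (Suc n) e (front_cycle q) *\<^sub>R prod_list (map x [0..<Suc n])"
    by (rule prod_list_front_cycle[OF q Suc.prems(2)])
  finally show ?case unfolding sign_\<sigma> by (simp add: mult.commute del: comp_apply)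
qed

end

lemma Alt_add: "Alt n k (\<lambda>f g. F f g + G f g) \<phi> = Alt n k F \<phi> + Alt n k G \<phi>"
  unfolding Alt_def by (simp add: scaleR_add_right sum.distrib)

lemma Alt_scale: "Alt n k (\<lambda>f g. c *\<^sub>R F f g) \<phi> = c *\<^sub>R Alt n k F \<phi>"
  unfolding Alt_def by (simp add: scaleR_right.sum mult.commute)

lemma Alt_sum: "Alt n k (\<lambda>f g. \<Sum>j\<in>J. F j f g) \<phi> = (\<Sum>j\<in>J. Alt n k (F j) \<phi>)"
  unfolding Alt_def by (simp add: scaleR_right.sum sum.swap[of _ J])

lemma Alt_cong:
  assumes "\<And>\<sigma>. \<sigma> permutes {..<n} \<Longrightarrow> F (\<phi> \<circ> \<sigma>) (k \<circ> \<sigma>) = G (\<phi> \<circ> \<sigma>) (k \<circ> \<sigma>)"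
  shows "Alt n k F \<phi> = Alt n k G \<phi>"
  unfolding Alt_def by (rule sum.cong) (auto simp: assms)

lemma koszul_sign_comp:
  assumes "\<sigma> permutes {..<n}" "\<tau> permutes {..<n}"
  shows "koszul_sign n k (\<sigma> \<circ> \<tau>) = koszul_sign n k \<sigma> * koszul_sign n (k \<circ> \<sigma>) \<tau>"
  unfolding koszul_sign_eq_graded_sign using graded_sign_comp[OF assms, of "\<lambda>i. k i + 1"]
  by (simp add: o_def)

lemma koszul_sign_square: "koszul_sign n k \<sigma> * koszul_sign n k \<sigma> = 1"
  unfolding koszul_sign_def by (simp add: power_add[symmetric])

lemma koszul_sign_lift_perm:
  "koszul_sign (Suc m) g (lift_perm \<tau>) = koszul_sign m (\<lambda>i. g (Suc i)) \<tau>"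
  unfolding koszul_sign_eq_graded_sign graded_sign_lift_perm by (simp add: o_def)

lemma Alt_reindex:
  assumes \<tau>: "\<tau> permutes {..<n}"
  shows "Alt n k F \<phi> = Alt n k (\<lambda>f g. koszul_sign n g \<tau> *\<^sub>R F (f \<circ> \<tau>) (g \<circ> \<tau>)) \<phi>"
proof -
  have "Alt n k F \<phi> = (\<Sum>\<sigma> | \<sigma> permutes {..<n}.
      koszul_sign n k (\<sigma> \<circ> \<tau>) *\<^sub>R F (\<phi> \<circ> (\<sigma> \<circ> \<tau>)) (k \<circ> (\<sigma> \<circ> \<tau>)))"
    unfolding Alt_def by (rule sum_permutations_compose_right[OF \<tau>])
  also have "\<dots> = Alt n k (\<lambda>f g. koszul_sign n g \<tau> *\<^sub>R F (f \<circ> \<tau>) (g \<circ> \<tau>)) \<phi>"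
    unfolding Alt_def by (rule sum.cong) (auto simp: koszul_sign_comp[OF _ \<tau>] o_assoc)
  finally show ?thesis .
qed

lemma Alt_alternating:
  assumes "\<And>\<sigma>. \<sigma> permutes {..<n} \<Longrightarrow> F (\<phi> \<circ> \<sigma>) (k \<circ> \<sigma>) = koszul_sign n k \<sigma> *\<^sub>R c"
  shows "Alt n k F \<phi> = fact n *\<^sub>R c"
proof -
  have "Alt n k F \<phi> = (\<Sum>\<sigma> | \<sigma> permutes {..<n}. c)"
    unfolding Alt_def by (rule sum.cong) (auto simp: assms koszul_sign_square)
  also have "\<dots> = fact n *\<^sub>R c"
    using card_permutations[of "{..<n}" n] by (simp add: sum_constant_scaleR)
  finally show ?thesis .
qed

(* Alternating the tail (f 1, ..., f m) inside an alternation over (f 0, ..., f m) is redundant: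
   each of the m! inner rearrangements is absorbed by reindexing the outer sum. *)
lemma Alt_nested:
  fixes H :: "'a::real_algebra_1 \<Rightarrow> nat \<Rightarrow> 'a"
  shows "Alt (Suc m) k (\<lambda>f g. H (f 0) (g 0) * Alt m (\<lambda>i. g (Suc i)) G (\<lambda>i. f (Suc i))) \<phi>
   = fact m *\<^sub>R Alt (Suc m) k (\<lambda>f g. H (f 0) (g 0) * G (\<lambda>i. f (Suc i)) (\<lambda>i. g (Suc i))) \<phi>"
proof -
  let ?X = "\<lambda>f g. H (f 0) (g 0) * G (\<lambda>i. f (Suc i)) (\<lambda>i. g (Suc i))"
  let ?X\<tau> = "\<lambda>\<tau> f g. koszul_sign m (\<lambda>i. g (Suc i)) \<tau> *\<^sub>R
     (H (f 0) (g 0) * G ((\<lambda>i. f (Suc i)) \<circ> \<tau>) ((\<lambda>i. g (Suc i)) \<circ> \<tau>))"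
  have "Alt (Suc m) k (\<lambda>f g. H (f 0) (g 0) * Alt m (\<lambda>i. g (Suc i)) G (\<lambda>i. f (Suc i))) \<phi>
     = Alt (Suc m) k (\<lambda>f g. \<Sum>\<tau> | \<tau> permutes {..<m}. ?X\<tau> \<tau> f g) \<phi>"
    unfolding Alt_def[of m] by (simp add: sum_distrib_left)
  also have "\<dots> = (\<Sum>\<tau> | \<tau> permutes {..<m}. Alt (Suc m) k (?X\<tau> \<tau>) \<phi>)"
    by (rule Alt_sum)
  also have "\<dots> = (\<Sum>\<tau> | \<tau> permutes {..<m}. Alt (Suc m) k ?X \<phi>)"
  proof (rule sum.cong[OF refl])
    fix \<tau> assume "\<tau> \<in> {\<tau>. \<tau> permutes {..<m}}"
    then have \<tau>: "lift_perm \<tau> permutes {..<Suc m}" using lift_perm_permutes by auto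
    show "Alt (Suc m) k (?X\<tau> \<tau>) \<phi> = Alt (Suc m) k ?X \<phi>"
      unfolding Alt_reindex[OF \<tau>, of k ?X] koszul_sign_lift_perm by (simp add: o_def lift_perm_def)
  qed
  also have "\<dots> = fact m *\<^sub>R Alt (Suc m) k ?X \<phi>"
    using card_permutations[of "{..<m}" m] by (simp only: sum_constant_scaleR) simp
  finally show ?thesis .
qed

lemma prod_list_update_add:
  fixes x :: "nat \<Rightarrow> 'a::semiring_1"
  shows "distinct L \<Longrightarrow> i \<in> set L \<Longrightarrow>
    prod_list (map (x(i := a + b)) L) = prod_list (map (x(i := a)) L) + prod_list (map (x(i := b)) L)"
proof (induction L)
  case Nil then show ?case by simp
next
  case (Cons l L)
  show ?case
  proof (cases "l = i")
    case True
    then have "i \<notin> set L" using Cons by auto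
    then have rest: "prod_list (map (x(i := v)) L) = prod_list (map x L)" for v
      by (auto intro!: arg_cong[where f=prod_list] map_cong)
    show ?thesis using True by (simp only: list.map prod_list.Cons fun_upd_same rest distrib_right)
  next
    case False
    then show ?thesis using Cons by (simp add: distrib_left)
  qed
qed

lemma prod_list_update_scaleR:
  fixes x :: "nat \<Rightarrow> 'a::real_algebra_1"
  shows "distinct L \<Longrightarrow> i \<in> set L \<Longrightarrow>
    prod_list (map (x(i := c *\<^sub>R a)) L) = c *\<^sub>R prod_list (map (x(i := a)) L)"
proof (induction L)
  case Nil then show ?case by simp
next
  case (Cons l L)
  show ?case
  proof (cases "l = i")
    case True
    then have "i \<notin> set L" using Cons by auto
    then have rest: "prod_list (map (x(i := v)) L) = prod_list (map x L)" for v
      by (auto intro!: arg_cong[where f=prod_list] map_cong)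
    show ?thesis using True by (simp only: list.map prod_list.Cons fun_upd_same rest) simp
  next
    case False
    then show ?thesis using Cons by simp
  qed
qed

locale dolbeault_algebra = graded_comm_algebra gr
  for gr :: "nat \<Rightarrow> 'a::real_algebra_1 set" +
  fixes D Db :: "'a \<Rightarrow> 'a"
  assumes D_add: "D (x + y) = D x + D y" and Db_add: "Db (x + y) = Db x + Db y"
    and D_scale: "D (c *\<^sub>R x) = c *\<^sub>R D x" and Db_scale: "Db (c *\<^sub>R x) = c *\<^sub>R Db x"
    and D_gr: "x \<in> gr k \<Longrightarrow> D x \<in> gr (k + 1)" and Db_gr: "x \<in> gr k \<Longrightarrow> Db x \<in> gr (k + 1)"
    and D_D: "D (D x) = 0" and Db_Db: "Db (Db x) = 0" and D_Db: "D (Db x) = - Db (D x)"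
    and D_leibniz: "x \<in> gr k \<Longrightarrow> D (x * y) = D x * y + ((-1::real) ^ k) *\<^sub>R (x * D y)"
    and Db_leibniz: "x \<in> gr k \<Longrightarrow> Db (x * y) = Db x * y + ((-1::real) ^ k) *\<^sub>R (x * Db y)"

lemma dolbeault_alg_imp_dolbeault_algebra:
  assumes "dolbeault_alg gr D Db"
  shows "dolbeault_algebra gr D Db"
proof -
  note axioms = assms[unfolded dolbeault_alg_def]
  show ?thesis by unfold_locales (use axioms in metis)+
qed

context dolbeault_algebra
begin

lemma D_sum: "D (\<Sum>i\<in>I. f i) = (\<Sum>i\<in>I. D (f i))"
  using D_add[of 0 0] by (induction I rule: infinite_finite_induct) (auto simp: D_add)

lemma Db_sum: "Db (\<Sum>i\<in>I. f i) = (\<Sum>i\<in>I. Db (f i))"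
  using Db_add[of 0 0] by (induction I rule: infinite_finite_induct) (auto simp: Db_add)

lemma D_Alt: "D (Alt n k F \<phi>) = Alt n k (\<lambda>f g. D (F f g)) \<phi>"
  unfolding Alt_def by (simp add: D_sum D_scale)

lemma Db_Alt: "Db (Alt n k F \<phi>) = Alt n k (\<lambda>f g. Db (F f g)) \<phi>"
  unfolding Alt_def by (simp add: Db_sum Db_scale)

lemma D_one: "D 1 = 0"
  using D_leibniz[OF gr_one, of 1] by simp

lemma Db_one: "Db 1 = 0"
  using Db_leibniz[OF gr_one, of 1] by simp

definition dtot :: "'a \<Rightarrow> 'a" where
  "dtot x = D x + Db x"

lemma dtot_sum: "dtot (\<Sum>i\<in>I. f i) = (\<Sum>i\<in>I. dtot (f i))"
  unfolding dtot_def by (simp add: D_sum Db_sum sum.distrib)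

lemma dtot_scale: "dtot (c *\<^sub>R x) = c *\<^sub>R dtot x"
  unfolding dtot_def by (simp add: D_scale Db_scale scaleR_add_right)

lemma dtot_leibniz: "x \<in> gr k \<Longrightarrow> dtot (x * y) = dtot x * y + ((-1::real) ^ k) *\<^sub>R (x * dtot y)"
  unfolding dtot_def by (simp add: D_leibniz Db_leibniz distrib_left distrib_right scaleR_add_right)

lemma dtot_prod_list:
  assumes "\<And>l. l < n \<Longrightarrow> x l \<in> gr (e l)"
  shows "dtot (prod_list (map x [0..<n]))
    = (\<Sum>i<n. ((-1::real) ^ (\<Sum>l<i. e l)) *\<^sub>R prod_list (map (x(i := dtot (x i))) [0..<n]))"
  using assms
proof (induction n)
  case 0 then show ?case by (simp add: dtot_def D_one Db_one)
next
  case (Suc n)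
  let ?P = "prod_list (map x [0..<n])"
  let ?term = "\<lambda>i N. ((-1::real) ^ (\<Sum>l<i. e l)) *\<^sub>R prod_list (map (x(i := dtot (x i))) [0..<N])"
  have P_gr: "?P \<in> gr (\<Sum>l<n. e l)" using Suc.prems by (intro prod_list_gr) auto
  have IH: "dtot ?P = (\<Sum>i<n. ?term i n)" by (rule Suc.IH) (use Suc.prems in auto)
  have "dtot (prod_list (map x [0..<Suc n])) = dtot ?P * x n + ((-1::real) ^ (\<Sum>l<n. e l)) *\<^sub>R (?P * dtot (x n))"
    unfolding upt_Suc by (simp add: dtot_leibniz[OF P_gr])
  also have "dtot ?P * x n = (\<Sum>i<n. ?term i (Suc n))"
    unfolding IH sum_distrib_right by (rule sum.cong) (auto simp: upt_Suc)
  also have "?P * dtot (x n) = prod_list (map (x(n := dtot (x n))) [0..<Suc n])"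
  proof -
    have "map (x(n := dtot (x n))) [0..<n] = map x [0..<n]" by (rule map_cong) auto
    then show ?thesis by (simp add: upt_Suc)
  qed
  finally show ?case by (simp only: sum.lessThan_Suc)
qed

end

definition op_word :: "(nat \<Rightarrow> 'a \<Rightarrow> 'a) \<Rightarrow> (nat \<Rightarrow> 'a::real_algebra_1) \<Rightarrow> nat \<Rightarrow> 'a" where
  "op_word ops f n = prod_list (map (\<lambda>l. ops l (f l)) [0..<n])"

lemma op_word_cong:
  "(\<And>l. l < n \<Longrightarrow> ops l (f l) = ops' l (f' l)) \<Longrightarrow> op_word ops f n = op_word ops' f' n"
  unfolding op_word_def by (rule arg_cong[where f=prod_list], rule map_cong) auto

lemma permuted_homogeneous:
  assumes "\<forall>l<n. \<phi> l \<in> A (k l)" "\<sigma> permutes {..<n}" "l < n"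
  shows "(\<phi> \<circ> \<sigma>) l \<in> A ((k \<circ> \<sigma>) l)"
  using assms permutes_in_image[OF assms(2)] by auto

lemma alternating_telescope:
  fixes u :: "nat \<Rightarrow> 'a::real_vector"
  shows "(\<Sum>j\<le>m. ((-1::real) ^ j) *\<^sub>R (u (Suc j) + u j)) = ((-1::real) ^ m) *\<^sub>R u (Suc m) + u 0"
  by (induction m) (simp_all add: algebra_simps)

context dolbeault_algebra
begin

definition omega_pattern :: "nat \<Rightarrow> nat \<Rightarrow> 'a \<Rightarrow> 'a" where
  "omega_pattern j l = (if l = 0 then id else if l \<le> j then D else Db)"

lemma omega_eq_Alt_words:
  "omega D Db m k \<phi> = (1 / fact (Suc m)) *\<^sub>R
     Alt (Suc m) k (\<lambda>f g. \<Sum>j\<le>m. ((-1::real) ^ j) *\<^sub>R op_word (omega_pattern j) f (Suc m)) \<phi>"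
proof -
  have word: "f 0 * prod_list (map (\<lambda>i. D (f i)) [1..<j + 1]) * prod_list (map (\<lambda>i. Db (f i)) [j + 1..<m + 1])
      = op_word (omega_pattern j) f (Suc m)" if "j \<le> m" for f j
  proof -
    have split: "[0..<Suc m] = 0 # [1..<j + 1] @ [j + 1..<m + 1]"
      using that upt_append[of 1 "j + 1" "Suc m"] by (simp add: upt_conv_Cons)
    have D_part: "map (\<lambda>l. omega_pattern j l (f l)) [1..<j + 1] = map (\<lambda>i. D (f i)) [1..<j + 1]"
      by (rule map_cong) (auto simp: omega_pattern_def)
    have Db_part: "map (\<lambda>l. omega_pattern j l (f l)) [j + 1..<m + 1] = map (\<lambda>i. Db (f i)) [j + 1..<m + 1]"
      by (rule map_cong) (auto simp: omega_pattern_def)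
    show ?thesis unfolding op_word_def split
      by (simp only: list.map map_append prod_list.Cons prod_list.append D_part Db_part)
        (simp add: omega_pattern_def mult.assoc)
  qed
  show ?thesis unfolding omega_def
    by (simp only: Suc_eq_plus1[symmetric])
      (rule arg_cong[where f="\<lambda>F. _ *\<^sub>R Alt _ _ F _"], auto intro!: sum.cong simp: word word[simplified])
qed

lemma op_word_front_cycle:
  assumes "q < Suc n" "\<And>l. l < Suc n \<Longrightarrow> ops l (f l) \<in> gr (e l)"
  shows "op_word (ops \<circ> front_cycle q) (f \<circ> front_cycle q) (Suc n)
    = graded_sign (Suc n) e (front_cycle q) *\<^sub>R op_word ops f (Suc n)"
  using prod_list_front_cycle[OF assms(1), of "\<lambda>l. ops l (f l)" e] assms(2)
  unfolding op_word_def by (simp add: o_def)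

(* Alternating a word that applies one degree-raising operator T to every form gives n! times the
   word: the shifted Koszul signs of the forms are the graded signs of their images. *)
lemma Alt_uniform_word:
  assumes \<phi>: "\<forall>l<n. \<phi> l \<in> gr (k l)" and T: "\<And>x d. x \<in> gr d \<Longrightarrow> T x \<in> gr (d + 1)"
    and ops: "\<And>l. l < n \<Longrightarrow> ops l = T"
  shows "Alt n k (\<lambda>f g. op_word ops f n) \<phi> = fact n *\<^sub>R op_word (\<lambda>_. T) \<phi> n"
proof (rule Alt_alternating)
  fix \<sigma> assume \<sigma>: "\<sigma> permutes {..<n}"
  have "op_word ops (\<phi> \<circ> \<sigma>) n = prod_list (map ((\<lambda>l. T (\<phi> l)) \<circ> \<sigma>) [0..<n])"
    unfolding op_word_def by (rule arg_cong[where f=prod_list], rule map_cong) (auto simp: ops)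
  also have "\<dots> = graded_sign n (\<lambda>l. k l + 1) \<sigma> *\<^sub>R prod_list (map (\<lambda>l. T (\<phi> l)) [0..<n])"
    by (rule prod_list_permute[OF \<sigma>]) (use \<phi> T in auto)
  finally show "op_word ops (\<phi> \<circ> \<sigma>) n = koszul_sign n k \<sigma> *\<^sub>R op_word (\<lambda>_. T) \<phi> n"
    by (simp add: koszul_sign_eq_graded_sign op_word_def)
qed

definition split_pattern :: "nat \<Rightarrow> nat \<Rightarrow> 'a \<Rightarrow> 'a" where
  "split_pattern c l = (if l < c then D else Db)"

definition alt_split :: "nat \<Rightarrow> (nat \<Rightarrow> nat) \<Rightarrow> (nat \<Rightarrow> 'a) \<Rightarrow> nat \<Rightarrow> 'a" where
  "alt_split n k \<phi> c = Alt n k (\<lambda>f g. op_word (split_pattern c) f n) \<phi>"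

(* Db f_0 D f_1 .. D f_c Db .. is the word with c leading D's rotated by front_cycle c; since all
   its factors have shifted parity, the rotation is invisible after alternation. *)
lemma Alt_split_pattern_rotated:
  assumes \<phi>: "\<forall>l<Suc n. \<phi> l \<in> gr (k l)" and c: "c < Suc n"
  shows "Alt (Suc n) k (\<lambda>f g. op_word (split_pattern c \<circ> front_cycle c) f (Suc n)) \<phi> = alt_split (Suc n) k \<phi> c"
proof -
  have rot: "front_cycle c permutes {..<Suc n}" by (rule front_cycle_permutes[OF c])
  have "Alt (Suc n) k (\<lambda>f g. op_word (split_pattern c \<circ> front_cycle c) f (Suc n)) \<phi>
      = Alt (Suc n) k (\<lambda>f g. koszul_sign (Suc n) g (front_cycle c) *\<^sub>R
          op_word (split_pattern c \<circ> front_cycle c) (f \<circ> front_cycle c) (Suc n)) \<phi>"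
    by (rule Alt_reindex[OF rot])
  also have "\<dots> = alt_split (Suc n) k \<phi> c"
    unfolding alt_split_def
  proof (rule Alt_cong)
    fix \<sigma> assume \<sigma>: "\<sigma> permutes {..<Suc n}"
    have "op_word (split_pattern c \<circ> front_cycle c) (\<phi> \<circ> \<sigma> \<circ> front_cycle c) (Suc n)
        = graded_sign (Suc n) (\<lambda>l. (k \<circ> \<sigma>) l + 1) (front_cycle c) *\<^sub>R op_word (split_pattern c) (\<phi> \<circ> \<sigma>) (Suc n)"
      by (rule op_word_front_cycle[OF c])
        (use permuted_homogeneous[where A = gr, OF \<phi> \<sigma>] D_gr Db_gr in \<open>auto simp: split_pattern_def\<close>)
    then show "koszul_sign (Suc n) (k \<circ> \<sigma>) (front_cycle c) *\<^sub>R
        op_word (split_pattern c \<circ> front_cycle c) (\<phi> \<circ> \<sigma> \<circ> front_cycle c) (Suc n)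
        = op_word (split_pattern c) (\<phi> \<circ> \<sigma>) (Suc n)"
      using koszul_sign_square[of "Suc n" "k \<circ> \<sigma>" "front_cycle c"]
        koszul_sign_eq_graded_sign[of "Suc n" "k \<circ> \<sigma>" "front_cycle c"]
      by (simp add: o_def)
  qed
  finally show ?thesis .
qed

lemma alt_split_telescope:
  assumes \<phi>: "\<forall>l<Suc m. \<phi> l \<in> gr (k l)"
  shows "(\<Sum>j\<le>m. ((-1::real) ^ j) *\<^sub>R (alt_split (Suc m) k \<phi> (Suc j) + alt_split (Suc m) k \<phi> j))
    = ((-1::real) ^ m) *\<^sub>R (fact (Suc m) *\<^sub>R prod_list (map (\<lambda>i. D (\<phi> i)) [0..<m + 1]))
      + fact (Suc m) *\<^sub>R prod_list (map (\<lambda>i. Db (\<phi> i)) [0..<m + 1])"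
proof -
  have all_D: "alt_split (Suc m) k \<phi> (Suc m) = fact (Suc m) *\<^sub>R op_word (\<lambda>_. D) \<phi> (Suc m)"
    unfolding alt_split_def by (rule Alt_uniform_word[OF \<phi>]) (auto simp: D_gr[simplified] split_pattern_def)
  have all_Db: "alt_split (Suc m) k \<phi> 0 = fact (Suc m) *\<^sub>R op_word (\<lambda>_. Db) \<phi> (Suc m)"
    unfolding alt_split_def by (rule Alt_uniform_word[OF \<phi>]) (auto simp: Db_gr[simplified] split_pattern_def)
  show ?thesis unfolding alternating_telescope all_D all_Db by (simp add: op_word_def)
qed

end

(* For forms of degrees g, word_degree g i is the total degree of
   the first i factors of a word of omega_m.  Applying d to position i + 1 of the j-th word gives
   cross_sign i j times Db D phi_(i+1) (d (D phi) = Db D phi, d (Db phi) = - Db D phi), and the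
   remaining factors form the (cross_index i j)-th word of omega_(m-1). *)

definition word_degree :: "(nat \<Rightarrow> nat) \<Rightarrow> nat \<Rightarrow> nat" where
  "word_degree g i = (\<Sum>l<i. if l = 0 then g 0 else g l + 1)"

definition cross_sign :: "nat \<Rightarrow> nat \<Rightarrow> real" where
  "cross_sign i j = (if Suc i \<le> j then 1 else -1)"

definition cross_index :: "nat \<Rightarrow> nat \<Rightarrow> nat" where
  "cross_index i j = (if Suc i \<le> j then j - 1 else j)"

lemma word_degree_Suc_shifted: "(\<Sum>l<Suc i. g l + 1) = word_degree g (Suc i) + 1"
  unfolding word_degree_def sum.lessThan_Suc_shift by simp

lemma cross_sign_index: "((-1::real) ^ j) * (- cross_sign i j) = (-1) ^ (cross_index i j)"
  by (cases j) (auto simp: cross_sign_def cross_index_def)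

(* Each index a < m arises as cross_index i j for exactly m + 1 pairs (i, j). *)
lemma sum_cross_index:
  fixes h :: "nat \<Rightarrow> 'a::real_vector"
  shows "(\<Sum>j\<le>m. \<Sum>i<m. h (cross_index i j)) = real (Suc m) *\<^sub>R (\<Sum>a<m. h a)"
proof -
  have column: "(\<Sum>j\<le>m. h (cross_index i j)) = (\<Sum>a<m. h a) + h i" if "i < m" for i
  proof -
    have "(\<Sum>j\<le>m. h (cross_index i j)) = (\<Sum>j\<le>i. h j) + (\<Sum>j\<in>{Suc i..m}. h (j - 1))"
    proof -
      have "{..m} = {..i} \<union> {Suc i..m}" using that by auto
      then have "(\<Sum>j\<le>m. h (cross_index i j))
          = (\<Sum>j\<le>i. h (cross_index i j)) + (\<Sum>j\<in>{Suc i..m}. h (cross_index i j))"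
        by (simp add: sum.union_disjoint ivl_disj_int)
      then show ?thesis by (simp add: cross_index_def)
    qed
    also have "(\<Sum>j\<in>{Suc i..m}. h (j - 1)) = (\<Sum>a\<in>{i..<m}. h a)"
    proof -
      have shift: "{Suc i..m} = Suc ` {i..<m}" using that by (auto simp: image_iff intro!: exI[of _ "_ - 1"])
      show ?thesis unfolding shift by (subst sum.reindex) auto
    qed
    also have "(\<Sum>j\<le>i. h j) = (\<Sum>a<i. h a) + h i" by (simp add: lessThan_Suc_atMost[symmetric])
    also have "(\<Sum>a<i. h a) + (\<Sum>a\<in>{i..<m}. h a) = (\<Sum>a<m. h a)"
    proof -
      have split: "{..<m} = {..<i} \<union> {i..<m}" using that by auto
      show ?thesis unfolding split by (rule sum.union_disjoint[symmetric]) auto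
    qed
    ultimately show ?thesis by (simp add: algebra_simps)
  qed
  have "(\<Sum>j\<le>m. \<Sum>i<m. h (cross_index i j)) = (\<Sum>i<m. \<Sum>j\<le>m. h (cross_index i j))"
    by (rule sum.swap)
  also have "\<dots> = (\<Sum>i<m. (\<Sum>a<m. h a) + h i)" by (rule sum.cong) (auto simp: column)
  also have "\<dots> = real m *\<^sub>R (\<Sum>a<m. h a) + (\<Sum>a<m. h a)" by (simp add: sum.distrib sum_constant_scaleR)
  finally show ?thesis by (simp add: algebra_simps)
qed

(* The sign bookkeeping for moving Db D phi (of degree G + 2) to the front of a word whose first
   entries have total degree E. *)
lemma slot_to_front_sign:
  fixes G E :: nat and s :: real
  shows "(-1::real) ^ ((G + 1) * (E + 1)) * (- s * (-1) ^ G) * (-1) ^ ((G + 2) * E) = (-1) ^ E * s"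
proof -
  have parity: "(G + 1) * (E + 1) + G + (G + 2) * E = 2 * (G * E + G + E) + (E + 1)"
    by (simp add: algebra_simps)
  have "(-1::real) ^ ((G + 1) * (E + 1)) * (-1) ^ G * (-1) ^ ((G + 2) * E)
      = (-1) ^ ((G + 1) * (E + 1) + G + (G + 2) * E)"
    by (simp add: power_add)
  also have "\<dots> = (-1) ^ (2 * (G * E + G + E) + (E + 1))" unfolding parity ..
  also have "\<dots> = - ((-1) ^ E)" by (simp add: power_add power_mult)
  finally show ?thesis by (simp add: algebra_simps)
qed

lemma koszul_sign_front_cycle:
  assumes "i \<le> n"
  shows "koszul_sign (Suc n) g (front_cycle i) = (-1) ^ ((g i + 1) * (\<Sum>l<i. g l + 1))"
  unfolding koszul_sign_eq_graded_sign using graded_sign_front_cycle[OF assms] by simp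

context dolbeault_algebra
begin

definition slot_ddbar_pattern :: "nat \<Rightarrow> nat \<Rightarrow> nat \<Rightarrow> 'a \<Rightarrow> 'a" where
  "slot_ddbar_pattern i j = (omega_pattern j)(Suc i := (\<lambda>x. Db (D x)))"

definition front_ddbar_pattern :: "nat \<Rightarrow> nat \<Rightarrow> 'a \<Rightarrow> 'a" where
  "front_ddbar_pattern a l = (if l = 0 then (\<lambda>x. Db (D x)) else omega_pattern a (l - 1))"

definition alt_cross :: "nat \<Rightarrow> (nat \<Rightarrow> nat) \<Rightarrow> (nat \<Rightarrow> 'a) \<Rightarrow> nat \<Rightarrow> 'a" where
  "alt_cross n k \<phi> a = Alt n k (\<lambda>f g. ((-1::real) ^ g 0) *\<^sub>R op_word (front_ddbar_pattern a) f n) \<phi>"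

lemma op_word_front_ddbar:
  "op_word (front_ddbar_pattern a) f (Suc m) = Db (D (f 0)) * op_word (omega_pattern a) (\<lambda>i. f (Suc i)) m"
  unfolding op_word_def upt_Suc_shift by (simp add: front_ddbar_pattern_def o_def)

lemma dtot_omega_word:
  assumes f: "\<And>l. l < Suc m \<Longrightarrow> f l \<in> gr (g l)"
  shows "dtot (op_word (omega_pattern j) f (Suc m))
    = op_word (split_pattern (Suc j)) f (Suc m) + op_word (split_pattern j \<circ> front_cycle j) f (Suc m)
      + (\<Sum>i<m. ((-1::real) ^ word_degree g (Suc i) * cross_sign i j) *\<^sub>R op_word (slot_ddbar_pattern i j) f (Suc m))"
proof -
  define x where "x l = omega_pattern j l (f l)" for l
  define e where "e l = (if l = 0 then g 0 else g l + 1)" for l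
  let ?hit = "\<lambda>i. prod_list (map (x(i := dtot (x i))) [0..<Suc m])"
  have x_gr: "x l \<in> gr (e l)" if "l < Suc m" for l
    using f[OF that] D_gr Db_gr by (auto simp: x_def e_def omega_pattern_def)
  have distinct: "distinct [0..<Suc m]" by simp
  have hit_later: "?hit (Suc i) = cross_sign i j *\<^sub>R op_word (slot_ddbar_pattern i j) f (Suc m)" if "i < m" for i
  proof -
    have "dtot (x (Suc i)) = cross_sign i j *\<^sub>R Db (D (f (Suc i)))"
      by (simp add: x_def omega_pattern_def dtot_def cross_sign_def D_D Db_Db D_Db)
    then have "?hit (Suc i) = cross_sign i j *\<^sub>R prod_list (map (x(Suc i := Db (D (f (Suc i))))) [0..<Suc m])"
      using prod_list_update_scaleR[OF distinct, of "Suc i" x] that by simp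
    also have "prod_list (map (x(Suc i := Db (D (f (Suc i))))) [0..<Suc m]) = op_word (slot_ddbar_pattern i j) f (Suc m)"
      unfolding op_word_def by (rule arg_cong[where f=prod_list], rule map_cong) (auto simp: x_def slot_ddbar_pattern_def)
    finally show ?thesis .
  qed
  have "dtot (op_word (omega_pattern j) f (Suc m)) = (\<Sum>i<Suc m. ((-1::real) ^ (\<Sum>l<i. e l)) *\<^sub>R ?hit i)"
    unfolding op_word_def x_def[symmetric] by (rule dtot_prod_list[OF x_gr])
  also have "\<dots> = ?hit 0 + (\<Sum>i<m. ((-1::real) ^ word_degree g (Suc i)) *\<^sub>R ?hit (Suc i))"
  proof -
    have "(\<Sum>l<Suc i. e l) = word_degree g (Suc i)" for i unfolding word_degree_def e_def ..
    then show ?thesis unfolding sum.lessThan_Suc_shift by simp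
  qed
  also have "?hit 0 = op_word (split_pattern (Suc j)) f (Suc m) + op_word (split_pattern j \<circ> front_cycle j) f (Suc m)"
  proof -
    have "dtot (x 0) = D (f 0) + Db (f 0)" by (simp add: x_def omega_pattern_def dtot_def)
    then have "?hit 0 = prod_list (map (x(0 := D (f 0))) [0..<Suc m]) + prod_list (map (x(0 := Db (f 0))) [0..<Suc m])"
      using prod_list_update_add[OF distinct, of 0 x] by simp
    also have "prod_list (map (x(0 := D (f 0))) [0..<Suc m]) = op_word (split_pattern (Suc j)) f (Suc m)"
      unfolding op_word_def by (rule arg_cong[where f=prod_list], rule map_cong)
        (auto simp: x_def omega_pattern_def split_pattern_def)
    also have "prod_list (map (x(0 := Db (f 0))) [0..<Suc m]) = op_word (split_pattern j \<circ> front_cycle j) f (Suc m)"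
      unfolding op_word_def by (rule arg_cong[where f=prod_list], rule map_cong)
        (auto simp: x_def omega_pattern_def split_pattern_def front_cycle_def)
    finally show ?thesis .
  qed
  also have "(\<Sum>i<m. ((-1::real) ^ word_degree g (Suc i)) *\<^sub>R ?hit (Suc i))
      = (\<Sum>i<m. ((-1::real) ^ word_degree g (Suc i) * cross_sign i j) *\<^sub>R op_word (slot_ddbar_pattern i j) f (Suc m))"
    by (rule sum.cong[OF refl]) (simp only: lessThan_iff hit_later scaleR_scaleR)
  finally show ?thesis .
qed

lemma front_ddbar_pattern_front_cycle:
  assumes "i < m" "j \<le> m" "l < Suc m"
  shows "front_ddbar_pattern (cross_index i j) l = slot_ddbar_pattern i j (front_cycle (Suc i) l)"
  using assms
  by (auto simp: front_ddbar_pattern_def slot_ddbar_pattern_def omega_pattern_def front_cycle_def cross_index_def)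

(* The rotation of a Db D-slot word, whose factor Db D phi_(i+1) has degree g (i + 1) + 2. *)
lemma op_word_slot_to_front:
  assumes f: "\<And>l. l < Suc m \<Longrightarrow> f l \<in> gr (g l)" and i: "i < m" and j: "j \<le> m"
  shows "op_word (front_ddbar_pattern (cross_index i j)) (f \<circ> front_cycle (Suc i)) (Suc m)
    = (-1) ^ ((g (Suc i) + 2) * word_degree g (Suc i)) *\<^sub>R op_word (slot_ddbar_pattern i j) f (Suc m)"
proof -
  define e where "e l = (if l = 0 then g 0 else if l = Suc i then g l + 2 else g l + 1)" for l
  have e_gr: "slot_ddbar_pattern i j l (f l) \<in> gr (e l)" if "l < Suc m" for l
    using f[OF that] D_gr Db_gr
    by (auto simp: slot_ddbar_pattern_def omega_pattern_def e_def numeral_2_eq_2)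
  have "op_word (front_ddbar_pattern (cross_index i j)) (f \<circ> front_cycle (Suc i)) (Suc m)
      = op_word (slot_ddbar_pattern i j \<circ> front_cycle (Suc i)) (f \<circ> front_cycle (Suc i)) (Suc m)"
    by (rule op_word_cong) (simp add: front_ddbar_pattern_front_cycle[OF i j])
  also have "\<dots> = graded_sign (Suc m) e (front_cycle (Suc i)) *\<^sub>R op_word (slot_ddbar_pattern i j) f (Suc m)"
    by (rule op_word_front_cycle) (use i e_gr in auto)
  also have "graded_sign (Suc m) e (front_cycle (Suc i)) = (-1) ^ ((g (Suc i) + 2) * word_degree g (Suc i))"
  proof -
    have "(\<Sum>l<Suc i. e l) = word_degree g (Suc i)"
      unfolding word_degree_def by (rule sum.cong) (auto simp: e_def)
    then show ?thesis using graded_sign_front_cycle[of "Suc i" m e] i by (simp add: e_def)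
  qed
  finally show ?thesis .
qed

lemma Alt_slot_to_front:
  assumes \<phi>: "\<forall>l<Suc m. \<phi> l \<in> gr (k l)" and i: "i < m" and j: "j \<le> m"
  shows "Alt (Suc m) k (\<lambda>f g. ((-1::real) ^ word_degree g (Suc i) * cross_sign i j) *\<^sub>R
      op_word (slot_ddbar_pattern i j) f (Suc m)) \<phi>
    = (- cross_sign i j) *\<^sub>R alt_cross (Suc m) k \<phi> (cross_index i j)"
proof -
  let ?c = "front_cycle (Suc i)" and ?front = "front_ddbar_pattern (cross_index i j)"
  have c: "?c permutes {..<Suc m}" by (rule front_cycle_permutes) (use i in simp)
  have "(- cross_sign i j) *\<^sub>R alt_cross (Suc m) k \<phi> (cross_index i j)
      = Alt (Suc m) k (\<lambda>f g. (- cross_sign i j * (-1::real) ^ g 0) *\<^sub>R op_word ?front f (Suc m)) \<phi>"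
    unfolding alt_cross_def by (simp add: Alt_scale[symmetric])
  also have "\<dots> = Alt (Suc m) k (\<lambda>f g. koszul_sign (Suc m) g ?c *\<^sub>R
      ((- cross_sign i j * (-1::real) ^ (g \<circ> ?c) 0) *\<^sub>R op_word ?front (f \<circ> ?c) (Suc m))) \<phi>"
    by (rule Alt_reindex[OF c])
  also have "\<dots> = Alt (Suc m) k (\<lambda>f g. ((-1::real) ^ word_degree g (Suc i) * cross_sign i j) *\<^sub>R
      op_word (slot_ddbar_pattern i j) f (Suc m)) \<phi>"
  proof (rule Alt_cong)
    fix \<sigma> assume \<sigma>: "\<sigma> permutes {..<Suc m}"
    define f where "f = \<phi> \<circ> \<sigma>"
    define g where "g = k \<circ> \<sigma>"
    have f_gr: "f l \<in> gr (g l)" if "l < Suc m" for l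
      unfolding f_def g_def by (rule permuted_homogeneous[where A = gr, OF \<phi> \<sigma> that])
    have sign: "koszul_sign (Suc m) g ?c = (-1) ^ ((g (Suc i) + 1) * (word_degree g (Suc i) + 1))"
      using koszul_sign_front_cycle[of "Suc i" m g] i word_degree_Suc_shifted[of g i] by simp
    have first: "(g \<circ> ?c) 0 = g (Suc i)" by (simp add: front_cycle_def)
    have word: "op_word ?front (f \<circ> ?c) (Suc m)
        = (-1) ^ ((g (Suc i) + 2) * word_degree g (Suc i)) *\<^sub>R op_word (slot_ddbar_pattern i j) f (Suc m)"
      by (rule op_word_slot_to_front[OF f_gr i j])
    show "koszul_sign (Suc m) (k \<circ> \<sigma>) ?c *\<^sub>R ((- cross_sign i j * (-1::real) ^ (k \<circ> \<sigma> \<circ> ?c) 0) *\<^sub>R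
        op_word ?front (\<phi> \<circ> \<sigma> \<circ> ?c) (Suc m))
      = ((-1::real) ^ word_degree (k \<circ> \<sigma>) (Suc i) * cross_sign i j) *\<^sub>R
        op_word (slot_ddbar_pattern i j) (\<phi> \<circ> \<sigma>) (Suc m)"
      unfolding f_def[symmetric] g_def[symmetric] word sign first
      using slot_to_front_sign[of "g (Suc i)" "word_degree g (Suc i)" "cross_sign i j"]
      by (simp add: mult.assoc)
  qed
  finally show ?thesis by simp
qed

lemma Alt_dtot_omega_word:
  assumes \<phi>: "\<forall>l<Suc m. \<phi> l \<in> gr (k l)" and j: "j \<le> m"
  shows "Alt (Suc m) k (\<lambda>f g. dtot (op_word (omega_pattern j) f (Suc m))) \<phi>
    = alt_split (Suc m) k \<phi> (Suc j) + alt_split (Suc m) k \<phi> j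
      + (\<Sum>i<m. (- cross_sign i j) *\<^sub>R alt_cross (Suc m) k \<phi> (cross_index i j))"
proof -
  have "Alt (Suc m) k (\<lambda>f g. dtot (op_word (omega_pattern j) f (Suc m))) \<phi>
      = Alt (Suc m) k (\<lambda>f g. op_word (split_pattern (Suc j)) f (Suc m)
          + op_word (split_pattern j \<circ> front_cycle j) f (Suc m)
          + (\<Sum>i<m. ((-1::real) ^ word_degree g (Suc i) * cross_sign i j) *\<^sub>R
              op_word (slot_ddbar_pattern i j) f (Suc m))) \<phi>"
    by (rule Alt_cong, rule dtot_omega_word, rule permuted_homogeneous[where A = gr, OF \<phi>])
  also have "\<dots> = alt_split (Suc m) k \<phi> (Suc j)
      + Alt (Suc m) k (\<lambda>f g. op_word (split_pattern j \<circ> front_cycle j) f (Suc m)) \<phi>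
      + (\<Sum>i<m. Alt (Suc m) k (\<lambda>f g. ((-1::real) ^ word_degree g (Suc i) * cross_sign i j) *\<^sub>R
          op_word (slot_ddbar_pattern i j) f (Suc m)) \<phi>)"
    unfolding alt_split_def by (simp only: Alt_add Alt_sum)
  also have "\<dots> = alt_split (Suc m) k \<phi> (Suc j) + alt_split (Suc m) k \<phi> j
      + (\<Sum>i<m. (- cross_sign i j) *\<^sub>R alt_cross (Suc m) k \<phi> (cross_index i j))"
    using j by (simp add: Alt_split_pattern_rotated[OF \<phi>] Alt_slot_to_front[OF \<phi> _ j])
  finally show ?thesis .
qed

lemma d_omega_expansion:
  assumes \<phi>: "\<forall>l<Suc m. \<phi> l \<in> gr (k l)"
  shows "D (omega D Db m k \<phi>) + Db (omega D Db m k \<phi>) = (1 / fact (Suc m)) *\<^sub>R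
     ((\<Sum>j\<le>m. ((-1::real) ^ j) *\<^sub>R (alt_split (Suc m) k \<phi> (Suc j) + alt_split (Suc m) k \<phi> j))
      + real (Suc m) *\<^sub>R (\<Sum>a<m. ((-1::real) ^ a) *\<^sub>R alt_cross (Suc m) k \<phi> a))"
proof -
  let ?dword = "\<lambda>j. Alt (Suc m) k (\<lambda>f g. dtot (op_word (omega_pattern j) f (Suc m))) \<phi>"
  let ?split = "\<lambda>j. alt_split (Suc m) k \<phi> (Suc j) + alt_split (Suc m) k \<phi> j"
  let ?cross = "\<lambda>a. ((-1::real) ^ a) *\<^sub>R alt_cross (Suc m) k \<phi> a"
  have "D (omega D Db m k \<phi>) + Db (omega D Db m k \<phi>) = (1 / fact (Suc m)) *\<^sub>R
      Alt (Suc m) k (\<lambda>f g. dtot (\<Sum>j\<le>m. ((-1::real) ^ j) *\<^sub>R op_word (omega_pattern j) f (Suc m))) \<phi>"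
    unfolding omega_eq_Alt_words D_scale Db_scale D_Alt Db_Alt dtot_def Alt_add scaleR_add_right ..
  also have "Alt (Suc m) k (\<lambda>f g. dtot (\<Sum>j\<le>m. ((-1::real) ^ j) *\<^sub>R op_word (omega_pattern j) f (Suc m))) \<phi>
      = (\<Sum>j\<le>m. ((-1::real) ^ j) *\<^sub>R ?dword j)"
    by (simp only: dtot_sum dtot_scale Alt_sum Alt_scale)
  also have "\<dots> = (\<Sum>j\<le>m. ((-1::real) ^ j) *\<^sub>R ?split j + (\<Sum>i<m. ?cross (cross_index i j)))"
  proof (rule sum.cong[OF refl])
    fix j assume "j \<in> {..m}"
    then have j: "j \<le> m" by simp
    have "((-1::real) ^ j) *\<^sub>R (\<Sum>i<m. (- cross_sign i j) *\<^sub>R alt_cross (Suc m) k \<phi> (cross_index i j))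
        = (\<Sum>i<m. ?cross (cross_index i j))"
      unfolding scaleR_right.sum scaleR_scaleR cross_sign_index ..
    then show "((-1::real) ^ j) *\<^sub>R ?dword j = ((-1::real) ^ j) *\<^sub>R ?split j + (\<Sum>i<m. ?cross (cross_index i j))"
      unfolding Alt_dtot_omega_word[OF \<phi> j] scaleR_add_right by simp
  qed
  also have "\<dots> = (\<Sum>j\<le>m. ((-1::real) ^ j) *\<^sub>R ?split j) + real (Suc m) *\<^sub>R (\<Sum>a<m. ?cross a)"
    unfolding sum.distrib sum_cross_index[of ?cross] ..
  finally show ?thesis .
qed

(* Group (b) is the last summand of the lemma: the inner omega_(m-1) is itself an alternation,
   which the outer one absorbs (Alt_nested), cancelling its factor 1/m!. *)
lemma Alt_ddbar_omega:
  assumes m: "1 \<le> m"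
  shows "Alt (m + 1) k (\<lambda>f g. ((-1::real) ^ g 0) *\<^sub>R
      (Db (D (f 0)) * omega D Db (m - 1) (\<lambda>i. g (i + 1)) (\<lambda>i. f (i + 1)))) \<phi>
    = (\<Sum>a<m. ((-1::real) ^ a) *\<^sub>R alt_cross (Suc m) k \<phi> a)"
proof -
  define G where "G f g = (\<Sum>j<m. ((-1::real) ^ j) *\<^sub>R op_word (omega_pattern j) f m)"
    for f :: "nat \<Rightarrow> 'a" and g :: "nat \<Rightarrow> nat"
  define H where "H x b = ((-1::real) ^ b) *\<^sub>R Db (D x)" for x b
  have omega_tail: "omega D Db (m - 1) g' f' = (1 / fact m) *\<^sub>R Alt m g' G f'" for g' f'
  proof -
    have "Suc (m - 1) = m" "{..m - 1} = {..<m}" using m by auto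
    then show ?thesis unfolding omega_eq_Alt_words G_def by simp
  qed
  have word: "H (f 0) (g 0) * G (\<lambda>i. f (Suc i)) (\<lambda>i. g (Suc i))
      = (\<Sum>a<m. ((-1::real) ^ a) *\<^sub>R (((-1::real) ^ g 0) *\<^sub>R op_word (front_ddbar_pattern a) f (Suc m)))"
    for f :: "nat \<Rightarrow> 'a" and g
    unfolding H_def G_def op_word_front_ddbar sum_distrib_left
    by (rule sum.cong[OF refl]) simp
  have "Alt (m + 1) k (\<lambda>f g. ((-1::real) ^ g 0) *\<^sub>R
      (Db (D (f 0)) * omega D Db (m - 1) (\<lambda>i. g (i + 1)) (\<lambda>i. f (i + 1)))) \<phi>
      = Alt (Suc m) k (\<lambda>f g. (1 / fact m) *\<^sub>R (H (f 0) (g 0) * Alt m (\<lambda>i. g (Suc i)) G (\<lambda>i. f (Suc i)))) \<phi>"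
    unfolding omega_tail H_def by simp
  also have "\<dots> = (1 / fact m) *\<^sub>R fact m *\<^sub>R Alt (Suc m) k (\<lambda>f g. H (f 0) (g 0) * G (\<lambda>i. f (Suc i)) (\<lambda>i. g (Suc i))) \<phi>"
    unfolding Alt_scale Alt_nested ..
  also have "Alt (Suc m) k (\<lambda>f g. H (f 0) (g 0) * G (\<lambda>i. f (Suc i)) (\<lambda>i. g (Suc i))) \<phi>
      = (\<Sum>a<m. ((-1::real) ^ a) *\<^sub>R alt_cross (Suc m) k \<phi> a)"
    unfolding word alt_cross_def Alt_sum Alt_scale ..
  finally show ?thesis by simp
qed

end

theorem lemma2p1:
  fixes gr :: "nat \<Rightarrow> 'a::real_algebra_1 set" and D Db :: "'a \<Rightarrow> 'a"
    and m :: nat and k :: "nat \<Rightarrow> nat" and \<phi> :: "nat \<Rightarrow> 'a"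
  assumes "dolbeault_alg gr D Db" and "m \<ge> 1" and "\<forall>i\<le>m. \<phi> i \<in> gr (k i)"
  shows "D (omega D Db m k \<phi>) + Db (omega D Db m k \<phi>) =
     ((-1::real) ^ m) *\<^sub>R prod_list (map (\<lambda>i. D (\<phi> i)) [0..<m + 1])
     + prod_list (map (\<lambda>i. Db (\<phi> i)) [0..<m + 1])
     + (1 / fact m) *\<^sub>R Alt (m + 1) k
         (\<lambda>f g. ((-1::real) ^ g 0) *\<^sub>R
            (Db (D (f 0)) * omega D Db (m - 1) (\<lambda>i. g (i + 1)) (\<lambda>i. f (i + 1)))) \<phi>"
proof -
  interpret dolbeault_algebra gr D Db
    using assms(1) by (rule dolbeault_alg_imp_dolbeault_algebra)
  have \<phi>: "\<forall>l<Suc m. \<phi> l \<in> gr (k l)" using assms(3) by auto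
  have fact_ratio: "(1 / fact (Suc m)) * real (Suc m) = (1 / fact m :: real)"
    by (simp del: of_nat_Suc)
  show ?thesis
    unfolding d_omega_expansion[OF \<phi>] alt_split_telescope[OF \<phi>] Alt_ddbar_omega[OF assms(2)]
    by (simp add: scaleR_add_right fact_ratio del: of_nat_Suc)
qed

end
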